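(* Let $G$ be a connected simple graph on $n$ vertices with Laplacian $L$. If $\mu$ is an integer with $\mu\notin[0,n+1]$, then $L$ is not $\mu$-collapsed, i.e. the matrix $L-\mu\,\mathrm{Id}$ is spread.
   Context: A graph is simple if any two distinct vertices are joined by at most one edge (no loops). The Laplacian $L=(\ell_{ij})\in M_n(\mathbb{Z})$ has $\ell_{ii}$ equal to the degree of $v_i$ and $\ell_{ij}=-1$ if $v_i,v_j$ are adjacent, $0$ otherwise ($i\neq j$). For $M\in M_n(\mathbb{Z})$, let $\mathrm{Im}(M)$ be the $\mathbb{Z}$-span of its columns; $M$ is spread if the quotient map $\mathbb{Z}^n\to\mathbb{Z}^n/\mathrm{Im}(M)$ is injective on the standard basis $\{e_1,\dots,e_n\}$ (equivalently, $e_i-e_j\notin\mathrm{Im}(M)$ for all $i\neq j$). For an integer $\mu$, $M$ is $\mu$-collapsed if $M-\mu\,\mathrm{Id}$ is not spread. *)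

theory Defs
  imports "HOL-Analysis.Analysis"
begin

definition simple_graph :: "('a \<Rightarrow> 'a \<Rightarrow> bool) \<Rightarrow> bool" where
  "simple_graph E \<longleftrightarrow> (\<forall>u v. E u v \<longrightarrow> E v u) \<and> (\<forall>v. \<not> E v v)"

definition connected_graph :: "('a \<Rightarrow> 'a \<Rightarrow> bool) \<Rightarrow> bool" where
  "connected_graph E \<longleftrightarrow> (\<forall>u v. E\<^sup>*\<^sup>* u v)"

definition laplacian :: "('a::finite \<Rightarrow> 'a \<Rightarrow> bool) \<Rightarrow> int^'a^'a" where
  "laplacian E = (\<chi> i j. if i = j then int (card {k. E i k}) else if E i j then -1 else 0)"

definition int_image :: "int^'n^'n \<Rightarrow> (int^'n) set" where
  "int_image M = {M *v x | x. True}"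

definition std_basis :: "'n::finite \<Rightarrow> int^'n" where
  "std_basis i = (\<chi> j. if j = i then 1 else 0)"

definition spread :: "int^'n::finite^'n \<Rightarrow> bool" where
  "spread M \<longleftrightarrow> (\<forall>i j. i \<noteq> j \<longrightarrow> std_basis i - std_basis j \<notin> int_image M)"

definition collapsed :: "int^'n::finite^'n \<Rightarrow> int \<Rightarrow> bool" where
  "collapsed M \<mu> \<longleftrightarrow> \<not> spread (M - mat \<mu>)"

end

theory Submission
  imports Defs
begin

text \<open>Suppose \<open>e\<^sub>i - e\<^sub>j = (L - \<mu>) y\<close> with \<open>y\<close> integral. Pairing with \<open>y\<close> gives
  \<open>y\<^sup>T L y = y\<^sub>i - y\<^sub>j + \<mu> |y|\<^sup>2\<close>. The quadratic form \<open>y\<^sup>T L y\<close>, a sum of \<open>(y\<^sub>u - y\<^sub>v)\<^sup>2\<close> over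
  the edges, lies between \<open>0\<close> and \<open>n |y|\<^sup>2\<close>, while integrality gives
  \<open>|y\<^sub>i - y\<^sub>j| \<le> y\<^sub>i\<^sup>2 + y\<^sub>j\<^sup>2 \<le> |y|\<^sup>2\<close>. For \<open>\<mu> \<le> -2\<close> or \<open>\<mu> \<ge> n + 2\<close> this forces \<open>y = 0\<close>;
  for \<open>\<mu> = -1\<close> it forces \<open>y\<^sup>T L y = 0\<close>, so \<open>y\<close> is constant on the connected graph.
  Either way \<open>y\<close> is constant, hence so is \<open>(L - \<mu>) y = -\<mu> y\<close>, but \<open>e\<^sub>i - e\<^sub>j\<close> is not.\<close>

lemma mat_mult_vec: "mat c *v x = c *s x"
  by (simp add: vec_eq_iff matrix_vector_mult_def mat_def if_distrib[of "\<lambda>a. a * _"] cong: if_cong)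

lemma std_basis_nth: "std_basis i $ u = (if u = i then 1 else 0)"
  by (simp add: std_basis_def)

lemma sum_mult_std_basis_diff:
  "(\<Sum>u\<in>UNIV. y $ u * (std_basis i - std_basis j) $ u) = y $ i - y $ j"
  by (simp add: std_basis_nth right_diff_distrib sum_subtractf if_distrib[of "\<lambda>a. _ * a"]
      cong: if_cong)

lemma quadratic_form_shifted_eq:
  fixes M :: "'a::comm_ring_1^'n^'n"
  assumes "(M - mat \<mu>) *v y = b"
  shows "(\<Sum>u\<in>UNIV. y $ u * (M *v y) $ u)
    = (\<Sum>u\<in>UNIV. y $ u * b $ u) + \<mu> * (\<Sum>u\<in>UNIV. (y $ u)\<^sup>2)"
proof -
  have "M *v y = b + \<mu> *s y"
    using assms by (simp add: matrix_vector_mult_diff_rdistrib mat_mult_vec algebra_simps)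
  then show ?thesis
    by (simp add: distrib_left sum.distrib sum_distrib_left power2_eq_square mult_ac)
qed

lemma abs_le_power2_int: "\<bar>a\<bar> \<le> (a::int)\<^sup>2"
proof (cases "a = 0")
  case False
  then have "\<bar>a\<bar> * 1 \<le> \<bar>a\<bar> * \<bar>a\<bar>"
    by (intro mult_left_mono) auto
  then show ?thesis
    by (simp add: power2_eq_square)
qed simp

lemma abs_diff_le_sum_power2_int: "\<bar>a - b\<bar> \<le> a\<^sup>2 + (b::int)\<^sup>2"
  using abs_triangle_ineq4[of a b] abs_le_power2_int[of a] abs_le_power2_int[of b] by linarith

lemma sum_sum_diff_power2_le:
  fixes f :: "'a \<Rightarrow> 'b::linordered_idom"
  assumes "finite A"
  shows "(\<Sum>u\<in>A. \<Sum>v\<in>A. (f u - f v)\<^sup>2) \<le> 2 * of_nat (card A) * (\<Sum>u\<in>A. (f u)\<^sup>2)"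
proof -
  have "(\<Sum>u\<in>A. \<Sum>v\<in>A. (f u - f v)\<^sup>2) = (\<Sum>u\<in>A. \<Sum>v\<in>A. (f u)\<^sup>2 + (f v)\<^sup>2 - 2 * f u * f v)"
    by (intro sum.cong refl) (simp add: power2_eq_square algebra_simps)
  also have "\<dots> = 2 * of_nat (card A) * (\<Sum>u\<in>A. (f u)\<^sup>2) - 2 * (\<Sum>u\<in>A. f u)\<^sup>2"
    by (simp add: sum.distrib sum_subtractf sum_distrib_left sum_distrib_right power2_eq_square
        algebra_simps)
  finally show ?thesis
    by simp
qed

lemma laplacian_mult_vec_nth:
  assumes "\<And>v. \<not> E v v"
  shows "(laplacian E *v x) $ u = (\<Sum>v\<in>UNIV. if E u v then x $ u - x $ v else 0)"
proof -
  have "(laplacian E *v x) $ u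
      = (\<Sum>v\<in>UNIV. (if u = v then int (card {k. E u k}) * x $ u else 0) + (if E u v then - x $ v else 0))"
    unfolding laplacian_def matrix_vector_mult_def using assms
    by (auto intro!: sum.cong)
  also have "\<dots> = (\<Sum>v\<in>UNIV. if E u v then x $ u else 0) - (\<Sum>v\<in>UNIV. if E u v then x $ v else 0)"
    by (simp add: sum.distrib sum.If_cases sum_negf)
  also have "\<dots> = (\<Sum>v\<in>UNIV. if E u v then x $ u - x $ v else 0)"
    by (simp add: sum_subtractf[symmetric] if_distrib cong: if_cong)
  finally show ?thesis .
qed

lemma laplacian_mult_vec_const:
  assumes "\<And>v. \<not> E v v" and "\<And>u v. x $ u = x $ v"
  shows "laplacian E *v x = 0"
proof -
  have "(laplacian E *v x) $ u = 0" for u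
    unfolding laplacian_mult_vec_nth[OF assms(1)] by (rule sum.neutral) (metis assms(2) diff_self)
  then show ?thesis
    by (simp add: vec_eq_iff)
qed

lemma laplacian_quadratic_form:
  assumes "simple_graph E"
  shows "2 * (\<Sum>u\<in>UNIV. x $ u * (laplacian E *v x) $ u)
    = (\<Sum>u\<in>UNIV. \<Sum>v\<in>UNIV. if E u v then (x $ u - x $ v)\<^sup>2 else 0)"
proof -
  have sym: "E u v = E v u" and irrefl: "\<not> E v v" for u v
    using assms unfolding simple_graph_def by blast+
  define g where "g u v = (if E u v then x $ u * (x $ u - x $ v) else 0)" for u v
  have "(\<Sum>u\<in>UNIV. x $ u * (laplacian E *v x) $ u) = (\<Sum>u\<in>UNIV. \<Sum>v\<in>UNIV. g u v)"
    unfolding laplacian_mult_vec_nth[OF irrefl] g_def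
    by (simp add: sum_distrib_left if_distrib cong: if_cong)
  moreover have "(\<Sum>u\<in>UNIV. \<Sum>v\<in>UNIV. g u v) = (\<Sum>u\<in>UNIV. \<Sum>v\<in>UNIV. g v u)"
    by (rule sum.swap)
  ultimately have "2 * (\<Sum>u\<in>UNIV. x $ u * (laplacian E *v x) $ u)
      = (\<Sum>u\<in>UNIV. \<Sum>v\<in>UNIV. g u v + g v u)"
    by (simp add: sum.distrib)
  also have "\<dots> = (\<Sum>u\<in>UNIV. \<Sum>v\<in>UNIV. if E u v then (x $ u - x $ v)\<^sup>2 else 0)"
    unfolding g_def by (intro sum.cong refl) (auto simp: sym power2_eq_square algebra_simps)
  finally show ?thesis .
qed

lemma laplacian_quadratic_form_nonneg:
  assumes "simple_graph E"
  shows "0 \<le> (\<Sum>u\<in>UNIV. x $ u * (laplacian E *v x) $ u)"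
proof -
  have "0 \<le> (\<Sum>u\<in>UNIV. \<Sum>v\<in>UNIV. if E u v then (x $ u - x $ v)\<^sup>2 else 0 :: int)"
    by (intro sum_nonneg) auto
  then show ?thesis
    unfolding laplacian_quadratic_form[OF assms, symmetric] by simp
qed

lemma laplacian_quadratic_form_le:
  fixes E :: "'a::finite \<Rightarrow> 'a \<Rightarrow> bool"
  assumes "simple_graph E"
  shows "(\<Sum>u\<in>UNIV. x $ u * (laplacian E *v x) $ u) \<le> int CARD('a) * (\<Sum>u\<in>UNIV. (x $ u)\<^sup>2)"
proof -
  have "(\<Sum>u\<in>UNIV. \<Sum>v\<in>UNIV. if E u v then (x $ u - x $ v)\<^sup>2 else 0)
      \<le> (\<Sum>u\<in>UNIV. \<Sum>v\<in>UNIV. (x $ u - x $ v)\<^sup>2)"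
    by (intro sum_mono) auto
  also have "\<dots> \<le> 2 * int CARD('a) * (\<Sum>u\<in>UNIV. (x $ u)\<^sup>2)"
    using sum_sum_diff_power2_le[of UNIV "\<lambda>u. x $ u"] by simp
  finally show ?thesis
    unfolding laplacian_quadratic_form[OF assms, symmetric] by simp
qed

lemma laplacian_quadratic_form_eq_0_imp_const:
  assumes "simple_graph E" and "connected_graph E"
    and "(\<Sum>u\<in>UNIV. x $ u * (laplacian E *v x) $ u) = 0"
  shows "x $ u = x $ v"
proof -
  have zero: "(\<Sum>u\<in>UNIV. \<Sum>v\<in>UNIV. if E u v then (x $ u - x $ v)\<^sup>2 else 0) = 0"
    using laplacian_quadratic_form[OF assms(1), of x] assms(3) by simp
  have edge: "x $ a = x $ c" if "E a c" for a c
  proof -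
    have "(\<Sum>v\<in>UNIV. if E a v then (x $ a - x $ v)\<^sup>2 else 0) = 0"
      using zero by (subst (asm) sum_nonneg_eq_0_iff) (auto intro!: sum_nonneg)
    then have "(if E a c then (x $ a - x $ c)\<^sup>2 else 0) = (0::int)"
      by (subst (asm) sum_nonneg_eq_0_iff) auto
    with that show ?thesis
      by simp
  qed
  from assms(2) have "E\<^sup>*\<^sup>* u v"
    unfolding connected_graph_def by blast
  then show ?thesis
    by (induction rule: rtranclp_induct) (auto dest: edge)
qed

lemma shifted_laplacian_solution_const:
  fixes E :: "'a::finite \<Rightarrow> 'a \<Rightarrow> bool"
  assumes graph: "simple_graph E" "connected_graph E"
    and \<mu>: "\<mu> \<notin> {0 .. int CARD('a) + 1}"
    and "i \<noteq> j" and sol: "(laplacian E - mat \<mu>) *v y = std_basis i - std_basis j"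
  shows "y $ u = y $ v"
proof -
  define Q where "Q = (\<Sum>u\<in>UNIV. y $ u * (laplacian E *v y) $ u)"
  define S where "S = (\<Sum>u\<in>UNIV. (y $ u)\<^sup>2)"
  have Q_eq: "Q = y $ i - y $ j + \<mu> * S"
    using quadratic_form_shifted_eq[OF sol] unfolding Q_def S_def sum_mult_std_basis_diff .
  have Q_bounds: "0 \<le> Q" "Q \<le> int CARD('a) * S"
    unfolding Q_def S_def
    by (fact laplacian_quadratic_form_nonneg[OF graph(1)] laplacian_quadratic_form_le[OF graph(1)])+
  have "(\<Sum>u\<in>{i, j}. (y $ u)\<^sup>2) \<le> S"
    unfolding S_def by (intro sum_mono2) auto
  then have diff_le: "\<bar>y $ i - y $ j\<bar> \<le> S"
    using \<open>i \<noteq> j\<close> abs_diff_le_sum_power2_int[of "y $ i" "y $ j"] by simp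
  have "0 \<le> S"
    unfolding S_def by (simp add: sum_nonneg)
  consider "\<mu> = -1" | "\<mu> \<le> -2" | "\<mu> \<ge> int CARD('a) + 2"
    using \<mu> by fastforce
  then show ?thesis
  proof cases
    case 1
    then have "Q = 0"
      using Q_eq Q_bounds diff_le by simp
    then show ?thesis
      using laplacian_quadratic_form_eq_0_imp_const[OF graph] unfolding Q_def by blast
  next
    case 2
    then have "\<mu> * S \<le> -2 * S"
      using \<open>0 \<le> S\<close> by (intro mult_right_mono) auto
    then have "S = 0"
      using Q_eq Q_bounds diff_le \<open>0 \<le> S\<close> by linarith
    then show ?thesis
      unfolding S_def by (simp add: sum_nonneg_eq_0_iff)
  next
    case 3
    then have "(int CARD('a) + 2) * S \<le> \<mu> * S"
      using \<open>0 \<le> S\<close> by (intro mult_right_mono) auto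
    then have "S = 0"
      using Q_eq Q_bounds diff_le \<open>0 \<le> S\<close> by (simp add: algebra_simps)
    then show ?thesis
      unfolding S_def by (simp add: sum_nonneg_eq_0_iff)
  qed
qed

theorem theorem3p1:
  fixes E :: "'a::finite \<Rightarrow> 'a \<Rightarrow> bool" and \<mu> :: int
  assumes "simple_graph E" and "connected_graph E"
    and "\<mu> \<notin> {0 .. int CARD('a) + 1}"
  shows "\<not> collapsed (laplacian E) \<mu>"
proof -
  have irrefl: "\<And>v. \<not> E v v"
    using assms(1) unfolding simple_graph_def by blast
  have "std_basis i - std_basis j \<noteq> (laplacian E - mat \<mu>) *v y" if "i \<noteq> j" for i j y
  proof
    assume sol: "std_basis i - std_basis j = (laplacian E - mat \<mu>) *v y"
    then have const: "y $ u = y $ v" for u v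
      using shifted_laplacian_solution_const[OF assms that] by metis
    have "(laplacian E - mat \<mu>) *v y = - \<mu> *s y"
      by (simp add: matrix_vector_mult_diff_rdistrib mat_mult_vec vec_eq_iff
          laplacian_mult_vec_const[OF irrefl const])
    then have "(std_basis i - std_basis j) $ i = (std_basis i - std_basis j) $ j"
      using sol const[of i j] by simp
    with that show False
      by (simp add: std_basis_nth)
  qed
  then show ?thesis
    unfolding collapsed_def spread_def int_image_def by blast
qed

end
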